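(* Let $t_1$ and $t_2$ be two terms. If the Martelli–Montanari unification algorithm, applied to the equation $t_1 = t_2$, returns a solved set of equations $S$, then the typed unification algorithm applied to $t_1$ and $t_2$ is also successful and returns the same set of equations $S$.
   Context: Terms are built from variables and function symbols: a variable is a term, and if $f$ is an $n$-ary function symbol and $t_1,\dots,t_n$ are terms then $f(t_1,\dots,t_n)$ is a term; a $0$-ary function symbol is a constant. Every constant has an associated base type, one of int, float, atom, string. Typed unification algorithm: given terms $t_1,t_2$, start from the pair $(S,F)=(\{t_1=t_2\},\mathit{true})$, where $F$ is a flag, and rewrite it with the following rules until none applies or the algorithm halts with $\mathit{wrong}$ ($c,d$ denote constants, $X$ a variable, $\mathit{Rest}$ the remaining equations): 1. $(\{f(t_1,\dots,t_n)=f(s_1,\dots,s_n)\}\cup \mathit{Rest},F)\to(\{t_1=s_1,\dots,t_n=s_n\}\cup\mathit{Rest},F)$; 2. $(\{f(t_1,\dots,t_n)=g(s_1,\dots,s_m)\}\cup\mathit{Rest},F)\to \mathit{wrong}$ if $f\neq g$ or $n\neq m$; 3. $(\{c=c\}\cup\mathit{Rest},F)\to(\mathit{Rest},F)$; 4. $(\{c=d\}\cup\mathit{Rest},F)\to(\mathit{Rest},\mathit{false})$ if $c\neq d$ and $c,d$ have the same type; 5. $(\{c=d\}\cup\mathit{Rest},F)\to\mathit{wrong}$ if $c\neq d$ and $c,d$ have different types; 6. $(\{c=f(t_1,\dots,t_n)\}\cup\mathit{Rest},F)\to\mathit{wrong}$; 7. $(\{f(t_1,\dots,t_n)=c\}\cup\mathit{Rest},F)\to\mathit{wrong}$;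 8. $(\{X=X\}\cup\mathit{Rest},F)\to(\mathit{Rest},F)$; 9. $(\{t=X\}\cup\mathit{Rest},F)\to(\{X=t\}\cup\mathit{Rest},F)$ if $t$ is not a variable; 10. $(\{X=t\}\cup\mathit{Rest},F)\to(\{X=t\}\cup[X\mapsto t](\mathit{Rest}),F)$ if $X$ does not occur in $t$ and $X$ occurs in $\mathit{Rest}$; 11. $(\{X=t\}\cup\mathit{Rest},F)\to(\mathit{Rest},\mathit{false})$ if $X$ occurs in $t$ and $X\neq t$. When no rule applies, the algorithm outputs $\mathit{false}$ if the flag is $\mathit{false}$, and otherwise outputs (succeeds with) the current solved set $S$. *)

theory Defs
  imports Main
begin

text \<open>Terms: variables and function symbols applied to argument lists.
  A constant is a function symbol applied to the empty list.\<close>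
datatype ('f, 'v) trm = Var 'v | Fn 'f "('f, 'v) trm list"

datatype basetype = TInt | TFloat | TAtom | TString

fun vars :: "('f, 'v) trm \<Rightarrow> 'v set" where
  "vars (Var x) = {x}"
| "vars (Fn f ts) = (\<Union>t\<in>set ts. vars t)"

fun is_var :: "('f, 'v) trm \<Rightarrow> bool" where
  "is_var (Var _) = True"
| "is_var (Fn _ _) = False"

fun subst1 :: "'v \<Rightarrow> ('f, 'v) trm \<Rightarrow> ('f, 'v) trm \<Rightarrow> ('f, 'v) trm" where
  "subst1 x t (Var y) = (if y = x then t else Var y)"
| "subst1 x t (Fn f ts) = Fn f (map (subst1 x t) ts)"

type_synonym ('f, 'v) eqs = "(('f, 'v) trm \<times> ('f, 'v) trm) set"

definition subst_eqs :: "'v \<Rightarrow> ('f, 'v) trm \<Rightarrow> ('f, 'v) eqs \<Rightarrow> ('f, 'v) eqs" where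
  "subst_eqs x t E = (\<lambda>(l, r). (subst1 x t l, subst1 x t r)) ` E"

definition occurs_in_eqs :: "'v \<Rightarrow> ('f, 'v) eqs \<Rightarrow> bool" where
  "occurs_in_eqs x E \<longleftrightarrow> (\<exists>(l, r)\<in>E. x \<in> vars l \<or> x \<in> vars r)"

datatype ('f, 'v) mm_state = MMState "('f, 'v) eqs" | MMFail

text \<open>One step: an equation e is selected from the set, Rest is the remainder (e \<notin> Rest).\<close>
inductive mm_step :: "('f, 'v) eqs \<Rightarrow> ('f, 'v) mm_state \<Rightarrow> bool" where
  mm_decomp: "\<lbrakk> (Fn f ts, Fn f ss) \<notin> Rest; length ts = length ss \<rbrakk> \<Longrightarrow>
     mm_step (insert (Fn f ts, Fn f ss) Rest) (MMState (set (zip ts ss) \<union> Rest))"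
| mm_clash: "\<lbrakk> (Fn f ts, Fn g ss) \<notin> Rest; f \<noteq> g \<or> length ts \<noteq> length ss \<rbrakk> \<Longrightarrow>
     mm_step (insert (Fn f ts, Fn g ss) Rest) MMFail"
| mm_delete: "(Var x, Var x) \<notin> Rest \<Longrightarrow>
     mm_step (insert (Var x, Var x) Rest) (MMState Rest)"
| mm_swap: "\<lbrakk> (t, Var x) \<notin> Rest; \<not> is_var t \<rbrakk> \<Longrightarrow>
     mm_step (insert (t, Var x) Rest) (MMState (insert (Var x, t) Rest))"
| mm_elim: "\<lbrakk> (Var x, t) \<notin> Rest; x \<notin> vars t; occurs_in_eqs x Rest \<rbrakk> \<Longrightarrow>
     mm_step (insert (Var x, t) Rest) (MMState (insert (Var x, t) (subst_eqs x t Rest)))"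
| mm_occurs: "\<lbrakk> (Var x, t) \<notin> Rest; x \<in> vars t; Var x \<noteq> t \<rbrakk> \<Longrightarrow>
     mm_step (insert (Var x, t) Rest) MMFail"

inductive mm_trans :: "('f, 'v) mm_state \<Rightarrow> ('f, 'v) mm_state \<Rightarrow> bool" where
  "mm_step E r \<Longrightarrow> mm_trans (MMState E) r"

definition mm_returns :: "('f, 'v) trm \<Rightarrow> ('f, 'v) trm \<Rightarrow> ('f, 'v) eqs \<Rightarrow> bool" where
  "mm_returns t1 t2 S \<longleftrightarrow>
     mm_trans\<^sup>*\<^sup>* (MMState {(t1, t2)}) (MMState S) \<and> \<not> (\<exists>r. mm_step S r)"

datatype ('f, 'v) tu_state = TUState "('f, 'v) eqs" bool | TUWrong

text \<open>ty gives the base type of each constant (0-ary symbol); it is only consulted on constants.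
  Rules 1--2 concern compound terms (arity \<ge> 1); constants are treated by rules 3--7.\<close>
inductive tu_step :: "('f \<Rightarrow> basetype) \<Rightarrow> ('f, 'v) eqs \<Rightarrow> bool \<Rightarrow> ('f, 'v) tu_state \<Rightarrow> bool"
  for ty :: "'f \<Rightarrow> basetype" where
  tu1: "\<lbrakk> (Fn f ts, Fn f ss) \<notin> Rest; length ts = length ss; ts \<noteq> [] \<rbrakk> \<Longrightarrow>
     tu_step ty (insert (Fn f ts, Fn f ss) Rest) F (TUState (set (zip ts ss) \<union> Rest) F)"
| tu2: "\<lbrakk> (Fn f ts, Fn g ss) \<notin> Rest; ts \<noteq> []; ss \<noteq> []; f \<noteq> g \<or> length ts \<noteq> length ss \<rbrakk> \<Longrightarrow>
     tu_step ty (insert (Fn f ts, Fn g ss) Rest) F TUWrong"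
| tu3: "(Fn c [], Fn c []) \<notin> Rest \<Longrightarrow>
     tu_step ty (insert (Fn c [], Fn c []) Rest) F (TUState Rest F)"
| tu4: "\<lbrakk> (Fn c [], Fn d []) \<notin> Rest; c \<noteq> d; ty c = ty d \<rbrakk> \<Longrightarrow>
     tu_step ty (insert (Fn c [], Fn d []) Rest) F (TUState Rest False)"
| tu5: "\<lbrakk> (Fn c [], Fn d []) \<notin> Rest; c \<noteq> d; ty c \<noteq> ty d \<rbrakk> \<Longrightarrow>
     tu_step ty (insert (Fn c [], Fn d []) Rest) F TUWrong"
| tu6: "\<lbrakk> (Fn c [], Fn f ts) \<notin> Rest; ts \<noteq> [] \<rbrakk> \<Longrightarrow>
     tu_step ty (insert (Fn c [], Fn f ts) Rest) F TUWrong"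
| tu7: "\<lbrakk> (Fn f ts, Fn c []) \<notin> Rest; ts \<noteq> [] \<rbrakk> \<Longrightarrow>
     tu_step ty (insert (Fn f ts, Fn c []) Rest) F TUWrong"
| tu8: "(Var x, Var x) \<notin> Rest \<Longrightarrow>
     tu_step ty (insert (Var x, Var x) Rest) F (TUState Rest F)"
| tu9: "\<lbrakk> (t, Var x) \<notin> Rest; \<not> is_var t \<rbrakk> \<Longrightarrow>
     tu_step ty (insert (t, Var x) Rest) F (TUState (insert (Var x, t) Rest) F)"
| tu10: "\<lbrakk> (Var x, t) \<notin> Rest; x \<notin> vars t; occurs_in_eqs x Rest \<rbrakk> \<Longrightarrow>
     tu_step ty (insert (Var x, t) Rest) F (TUState (insert (Var x, t) (subst_eqs x t Rest)) F)"
| tu11: "\<lbrakk> (Var x, t) \<notin> Rest; x \<in> vars t; Var x \<noteq> t \<rbrakk> \<Longrightarrow>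
     tu_step ty (insert (Var x, t) Rest) F (TUState Rest False)"

inductive tu_trans :: "('f \<Rightarrow> basetype) \<Rightarrow> ('f, 'v) tu_state \<Rightarrow> ('f, 'v) tu_state \<Rightarrow> bool"
  for ty :: "'f \<Rightarrow> basetype" where
  "tu_step ty E F r \<Longrightarrow> tu_trans ty (TUState E F) r"

definition tu_returns :: "('f \<Rightarrow> basetype) \<Rightarrow> ('f, 'v) trm \<Rightarrow> ('f, 'v) trm \<Rightarrow> ('f, 'v) eqs \<Rightarrow> bool" where
  "tu_returns ty t1 t2 S \<longleftrightarrow>
     (tu_trans ty)\<^sup>*\<^sup>* (TUState {(t1, t2)} True) (TUState S True) \<and> \<not> (\<exists>F r. tu_step ty S F r)"

end

theory Submission
  imports Defs
begin

text \<open>Every step of the Martelli--Montanari algorithm that does not fail is an instance of a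
  typed rule that leaves the flag untouched (a decomposition of two equal constants being rule 3),
  so a successful MM run is replayed by the typed algorithm with the flag staying true.
  Conversely, each typed rule is an instance of an MM rule (rules 3--7 are decomposition or
  clash on constants), so the set on which MM halts is also irreducible for the typed algorithm.\<close>

lemma mm_step_imp_tu_step:
  assumes "mm_step E (MMState E')"
  shows "tu_step ty E F (TUState E' F)"
  using assms
proof (cases rule: mm_step.cases)
  case (mm_decomp f ts ss Rest)
  show ?thesis
  proof (cases "ts = []")
    case True
    with mm_decomp show ?thesis by (auto intro: tu_step.tu3)
  next
    case False
    with mm_decomp show ?thesis by (auto intro: tu_step.tu1)
  qed
qed (auto intro: tu_step.intros)

lemma tu_step_imp_mm_step:
  assumes "tu_step ty E F r"
  shows "\<exists>r'. mm_step E r'"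
  using assms
proof (cases rule: tu_step.cases)
  case (tu3 c Rest)
  then show ?thesis using mm_step.mm_decomp[of c "[]" "[]" Rest] by auto
next
  case (tu4 c d Rest)
  then show ?thesis using mm_step.mm_clash[of c "[]" d "[]" Rest] by auto
next
  case (tu5 c d Rest)
  then show ?thesis using mm_step.mm_clash[of c "[]" d "[]" Rest] by auto
next
  case (tu6 c f ts Rest)
  then show ?thesis using mm_step.mm_clash[of c "[]" f ts Rest] by auto
next
  case (tu7 f ts c Rest)
  then show ?thesis using mm_step.mm_clash[of f ts c "[]" Rest] by auto
qed (auto intro: mm_step.intros)

lemma mm_trans_rtranclp_imp_tu_trans_rtranclp:
  assumes "mm_trans\<^sup>*\<^sup>* (MMState E) (MMState S)"
  shows "(tu_trans ty)\<^sup>*\<^sup>* (TUState E F) (TUState S F)"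
  using assms
proof (induction "MMState S" arbitrary: S rule: rtranclp_induct)
  case (step y)
  from step.hyps(2) obtain E' where y: "y = MMState E'" and "mm_step E' (MMState S)"
    by (cases rule: mm_trans.cases) auto
  then have "tu_trans ty (TUState E' F) (TUState S F)"
    by (auto intro: tu_trans.intros mm_step_imp_tu_step)
  with step.hyps(3) y show ?case by simp
qed simp

theorem theorem1:
  fixes ty :: "'f \<Rightarrow> basetype" and t1 t2 :: "('f, 'v) trm" and S :: "('f, 'v) eqs"
  assumes "mm_returns t1 t2 S"
  shows "tu_returns ty t1 t2 S"
  using assms mm_trans_rtranclp_imp_tu_trans_rtranclp tu_step_imp_mm_step
  unfolding mm_returns_def tu_returns_def by blast

end
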